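(* Let $G$ be finite and $z\in\mathbb C\setminus\{0\}$. If $\mu\in\mathrm{FA}(P)$ satisfies $\mathcal T'\mu=z\mu$, then the function $f_\mu:E\to\mathbb C$, $f_\mu(e)=\mu(\bar e)$, satisfies $Sf_\mu=zf_\mu$. Conversely, if $f\in\mathrm{Map}(E)$ satisfies $Sf=zf$, then $\mu_f(e_1,\dots,e_n):=z^{1-n}f(\overline{e_n})$ defines an element $\mu_f\in\mathrm{FA}(P)$ with $\mathcal T'\mu_f=z\mu_f$. The maps $\mu\mapsto f_\mu$ and $f\mapsto\mu_f$ are mutually inverse linear isomorphisms between $\{\mu\in\mathrm{FA}(P):\mathcal T'\mu=z\mu\}$ and $\{f\in\mathrm{Map}(E):Sf=zf\}$.
   Context: $G$ is a finite connected graph (no loops, no multiple edges, every vertex of degree $\ge2$); $E$ oriented edges with $\iota,\tau$ and opposite $\bar e$; turn $e\rightsquigarrow e'$ iff $\tau(e)=\iota(e')$, $e'\ne\bar e$. $P$ = infinite paths $(e_1,e_2,\dots)$ with $e_i\rightsquigarrow e_{i+1}$; $(\mathcal Tf)(e_1,\dots)=\sum_{e_0\rightsquigarrow e_1}f(e_0,e_1,\dots)$. Postal codes: finite paths $c=(c_1,\dots,c_m)$, $m\ge1$, with $c_i\rightsquigarrow c_{i+1}$; $\mathcal C_m$, $\mathcal C=\bigcup\mathcal C_m$; district $P_c$ = paths beginning with $c$; $\mathbf 1_c$ its indicator. $D_\infty$ = functions on $P$ depending only on finitely many initial edges. $\mathrm{FA}(P)=\{\mu:\mathcal C\to\mathbb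 C:\mu(c)=\sum_{e:c_m\rightsquigarrow e}\mu(c,e)\ \forall c\}$, where $(c,e)$ is the one-edge extension. Pairing: for $f\in D_m$, $\langle f,\mu\rangle=\sum_{c\in\mathcal C_m}f(c)\mu(c)$. Dual transfer operator $\mathcal T':\mathrm{FA}(P)\to\mathrm{FA}(P)$, $(\mathcal T'\mu)(c):=\langle\mathcal T\mathbf 1_c,\mu\rangle$; equivalently $\langle\mathcal Tf,\mu\rangle=\langle f,\mathcal T'\mu\rangle$ for $f\in D_\infty$. $(Sf)(e)=\sum_{e'\rightsquigarrow e}f(e')$. *)

theory Defs
  imports Complex_Main "HOL-Library.FuncSet"
begin

definition graph_ok :: "'v set \<Rightarrow> ('v \<Rightarrow> 'v \<Rightarrow> bool) \<Rightarrow> bool" where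
  "graph_ok V Adj \<longleftrightarrow> finite V \<and> V \<noteq> {}
     \<and> (\<forall>u w. Adj u w \<longrightarrow> u \<in> V \<and> w \<in> V)
     \<and> (\<forall>u w. Adj u w \<longrightarrow> Adj w u)
     \<and> (\<forall>u. \<not> Adj u u)
     \<and> (\<forall>u\<in>V. \<forall>w\<in>V. Adj\<^sup>*\<^sup>* u w)
     \<and> (\<forall>u\<in>V. card {w. Adj u w} \<ge> 2)"

definition oedges :: "('v \<Rightarrow> 'v \<Rightarrow> bool) \<Rightarrow> ('v \<times> 'v) set" where
  "oedges Adj = {(u, w). Adj u w}"

definition iota :: "'v \<times> 'v \<Rightarrow> 'v" where "iota e = fst e"
definition tau :: "'v \<times> 'v \<Rightarrow> 'v" where "tau e = snd e"
definition opp :: "'v \<times> 'v \<Rightarrow> 'v \<times> 'v" where "opp e = (snd e, fst e)"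

definition turn :: "('v \<Rightarrow> 'v \<Rightarrow> bool) \<Rightarrow> 'v \<times> 'v \<Rightarrow> 'v \<times> 'v \<Rightarrow> bool" where
  "turn Adj e e' \<longleftrightarrow> e \<in> oedges Adj \<and> e' \<in> oedges Adj \<and> tau e = iota e' \<and> e' \<noteq> opp e"

definition paths :: "('v \<Rightarrow> 'v \<Rightarrow> bool) \<Rightarrow> (nat \<Rightarrow> 'v \<times> 'v) set" where
  "paths Adj = {p. \<forall>i. turn Adj (p i) (p (Suc i))}"

definition codes :: "('v \<Rightarrow> 'v \<Rightarrow> bool) \<Rightarrow> ('v \<times> 'v) list set" where
  "codes Adj = {c. c \<noteq> [] \<and> set c \<subseteq> oedges Adj
                 \<and> (\<forall>i. Suc i < length c \<longrightarrow> turn Adj (c ! i) (c ! Suc i))}"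

definition codes_m :: "('v \<Rightarrow> 'v \<Rightarrow> bool) \<Rightarrow> nat \<Rightarrow> ('v \<times> 'v) list set" where
  "codes_m Adj m = {c \<in> codes Adj. length c = m}"

definition begins :: "(nat \<Rightarrow> 'v \<times> 'v) \<Rightarrow> ('v \<times> 'v) list \<Rightarrow> bool" where
  "begins p c \<longleftrightarrow> (\<forall>i < length c. p i = c ! i)"

definition ind :: "('v \<times> 'v) list \<Rightarrow> (nat \<Rightarrow> 'v \<times> 'v) \<Rightarrow> complex" where
  "ind c p = (if begins p c then 1 else 0)"

definition transfer :: "('v \<Rightarrow> 'v \<Rightarrow> bool) \<Rightarrow> ((nat \<Rightarrow> 'v \<times> 'v) \<Rightarrow> complex)
     \<Rightarrow> (nat \<Rightarrow> 'v \<times> 'v) \<Rightarrow> complex" where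
  "transfer Adj f p = (\<Sum>e0 \<in> {e0. turn Adj e0 (p 0)}. f (case_nat e0 p))"

text \<open>A chosen infinite path beginning with the code c (used to evaluate
  functions in D_m on codes of length m).\<close>
definition ext_path :: "('v \<Rightarrow> 'v \<Rightarrow> bool) \<Rightarrow> ('v \<times> 'v) list \<Rightarrow> nat \<Rightarrow> 'v \<times> 'v" where
  "ext_path Adj c = (SOME p. p \<in> paths Adj \<and> begins p c)"

definition pairing :: "('v \<Rightarrow> 'v \<Rightarrow> bool) \<Rightarrow> nat \<Rightarrow> ((nat \<Rightarrow> 'v \<times> 'v) \<Rightarrow> complex)
     \<Rightarrow> (('v \<times> 'v) list \<Rightarrow> complex) \<Rightarrow> complex" where
  "pairing Adj m f \<mu> = (\<Sum>c \<in> codes_m Adj m. f (ext_path Adj c) * \<mu> c)"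

text \<open>Finitely additive measures FA(P), as functions on codes (extended by 0).\<close>
definition FA :: "('v \<Rightarrow> 'v \<Rightarrow> bool) \<Rightarrow> (('v \<times> 'v) list \<Rightarrow> complex) set" where
  "FA Adj = {\<mu>. (\<forall>c \<in> codes Adj. \<mu> c = (\<Sum>e \<in> {e. turn Adj (last c) e}. \<mu> (c @ [e])))
               \<and> (\<forall>c. c \<notin> codes Adj \<longrightarrow> \<mu> c = 0)}"

text \<open>Dual transfer operator: (T' \<mu>)(c) = \<langle>T 1_c, \<mu>\<rangle>; T 1_c \<in> D_m for m = |c|.\<close>
definition dual_transfer :: "('v \<Rightarrow> 'v \<Rightarrow> bool) \<Rightarrow> (('v \<times> 'v) list \<Rightarrow> complex)
     \<Rightarrow> ('v \<times> 'v) list \<Rightarrow> complex" where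
  "dual_transfer Adj \<mu> c = (if c \<in> codes Adj
      then pairing Adj (length c) (transfer Adj (ind c)) \<mu> else 0)"

definition MapE :: "('v \<Rightarrow> 'v \<Rightarrow> bool) \<Rightarrow> ('v \<times> 'v \<Rightarrow> complex) set" where
  "MapE Adj = {f. \<forall>e. e \<notin> oedges Adj \<longrightarrow> f e = 0}"

definition Sop :: "('v \<Rightarrow> 'v \<Rightarrow> bool) \<Rightarrow> ('v \<times> 'v \<Rightarrow> complex) \<Rightarrow> 'v \<times> 'v \<Rightarrow> complex" where
  "Sop Adj f e = (if e \<in> oedges Adj then (\<Sum>e' \<in> {e'. turn Adj e' e}. f e') else 0)"

definition f_of_mu :: "('v \<Rightarrow> 'v \<Rightarrow> bool) \<Rightarrow> (('v \<times> 'v) list \<Rightarrow> complex) \<Rightarrow> 'v \<times> 'v \<Rightarrow> complex" where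
  "f_of_mu Adj \<mu> e = (if e \<in> oedges Adj then \<mu> [opp e] else 0)"

definition mu_of_f :: "('v \<Rightarrow> 'v \<Rightarrow> bool) \<Rightarrow> complex \<Rightarrow> ('v \<times> 'v \<Rightarrow> complex) \<Rightarrow> ('v \<times> 'v) list \<Rightarrow> complex" where
  "mu_of_f Adj z f c = (if c \<in> codes Adj then z powi (1 - int (length c)) * f (opp (last c)) else 0)"

definition FA_eig :: "('v \<Rightarrow> 'v \<Rightarrow> bool) \<Rightarrow> complex \<Rightarrow> (('v \<times> 'v) list \<Rightarrow> complex) set" where
  "FA_eig Adj z = {\<mu> \<in> FA Adj. dual_transfer Adj \<mu> = (\<lambda>c. z * \<mu> c)}"

definition S_eig :: "('v \<Rightarrow> 'v \<Rightarrow> bool) \<Rightarrow> complex \<Rightarrow> ('v \<times> 'v \<Rightarrow> complex) set" where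
  "S_eig Adj z = {f \<in> MapE Adj. Sop Adj f = (\<lambda>e. z * f e)}"

end

theory Submission
  imports Defs
begin

text \<open>Since \<open>T 1\<^sub>c\<close> is the indicator of the codes obtained by shifting \<open>c\<close> one
  step to the left and appending a turn, the dual transfer operator acts by
  \<open>(T'\<mu>)(c\<^sub>1,...,c\<^sub>m) = \<Sum>\<^sub>c\<^sub>m\<^sub>\<leadsto>\<^sub>e \<mu>(c\<^sub>2,...,c\<^sub>m,e)\<close>.
  For finitely additive \<open>\<mu>\<close> and \<open>m \<ge> 2\<close> the right-hand side is \<open>\<mu>(c\<^sub>2,...,c\<^sub>m)\<close>, so an
  eigenmeasure satisfies \<open>\<mu>(c) = z\<^sup>1\<^sup>-\<^sup>m \<mu>(c\<^sub>m)\<close> and is determined by its values on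
  single edges. For \<open>m = 1\<close>, after reversing edges (which turns \<open>e \<leadsto> e'\<close> into
  \<open>e' \<leadsto> e\<close>), the formula is exactly \<open>S f = z f\<close>. The same computation shows
  conversely that \<open>\<mu>\<^sub>f\<close> is finitely additive and an eigenmeasure.\<close>

lemma codes_iff_successively:
  "c \<in> codes Adj \<longleftrightarrow> c \<noteq> [] \<and> set c \<subseteq> oedges Adj \<and> successively (turn Adj) c"
  by (simp add: codes_def successively_conv_nth)

lemma singleton_in_codes_iff [simp]: "[e] \<in> codes Adj \<longleftrightarrow> e \<in> oedges Adj"
  by (simp add: codes_iff_successively)

lemma last_in_oedges: "c \<in> codes Adj \<Longrightarrow> last c \<in> oedges Adj"
  by (auto simp: codes_iff_successively)

lemma snoc_in_codes: "c \<in> codes Adj \<Longrightarrow> turn Adj (last c) e \<Longrightarrow> c @ [e] \<in> codes Adj"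
  by (auto simp: codes_iff_successively successively_append_iff turn_def)

lemma tl_in_codes: "c \<in> codes Adj \<Longrightarrow> tl c \<noteq> [] \<Longrightarrow> tl c \<in> codes Adj"
  by (cases c) (auto simp: codes_iff_successively successively_Cons)

lemma tl_snoc_in_codes_m:
  assumes "c \<in> codes Adj" and "turn Adj (last c) e"
  shows "tl c @ [e] \<in> codes_m Adj (length c)"
proof (cases "tl c = []")
  case True
  then show ?thesis using assms by (cases c) (auto simp: codes_m_def codes_def turn_def)
next
  case False
  then have "last (tl c) = last c" by (cases c) auto
  then have "tl c @ [e] \<in> codes Adj"
    using assms False by (simp add: tl_in_codes snoc_in_codes)
  then show ?thesis using False by (cases c) (simp_all add: codes_m_def)
qed

lemma finite_codes_m: "finite (oedges Adj) \<Longrightarrow> finite (codes_m Adj m)"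
  by (rule finite_subset[OF _ finite_lists_length_eq[of "oedges Adj" m]])
     (auto simp: codes_m_def codes_def)

lemma shifted_code_iff:
  assumes "x # xs \<in> codes Adj" and "c' \<in> codes_m Adj (Suc (length xs))"
  shows "turn Adj x (hd c') \<and> butlast c' = xs \<longleftrightarrow>
    (\<exists>e. turn Adj (last (x # xs)) e \<and> c' = xs @ [e])"
proof
  assume shift: "turn Adj x (hd c') \<and> butlast c' = xs"
  have "c' \<noteq> []" and succ: "successively (turn Adj) c'"
    using assms(2) by (auto simp: codes_m_def codes_iff_successively)
  then have c': "c' = xs @ [last c']"
    using shift append_butlast_last_id by metis
  have "turn Adj (last (x # xs)) (last c')"
  proof (cases "xs = []")
    case True
    then show ?thesis using shift c' by (metis last_ConsL list.sel(1) append_Nil)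
  next
    case False
    then show ?thesis
      using succ c' by (metis last_ConsR successively_append_iff list.sel(1) not_Cons_self2)
  qed
  then show "\<exists>e. turn Adj (last (x # xs)) e \<and> c' = xs @ [e]" using c' by blast
next
  assume "\<exists>e. turn Adj (last (x # xs)) e \<and> c' = xs @ [e]"
  then obtain e where "turn Adj (last (x # xs)) e" and "c' = xs @ [e]" by blast
  moreover have "successively (turn Adj) (x # xs)"
    using assms(1) by (simp add: codes_iff_successively)
  ultimately show "turn Adj x (hd c') \<and> butlast c' = xs"
    by (cases xs) auto
qed

lemma begins_case_nat_Cons: "begins (case_nat e0 p) (x # xs) \<longleftrightarrow> e0 = x \<and> begins p xs"
  by (auto simp: begins_def less_Suc_eq_0_disj)

lemma begins_prefix_iff:
  "begins p c \<Longrightarrow> length xs \<le> length c \<Longrightarrow> begins p xs \<longleftrightarrow> xs = take (length xs) c"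
  by (auto simp: begins_def list_eq_iff_nth_eq)

lemma transfer_ind_Cons:
  assumes "finite (oedges Adj)"
  shows "transfer Adj (ind (x # xs)) p = of_bool (turn Adj x (p 0) \<and> begins p xs)"
proof -
  have "finite {e0. turn Adj e0 (p 0)}"
    using assms by (rule finite_subset[rotated]) (auto simp: turn_def)
  moreover have "transfer Adj (ind (x # xs)) p
      = (\<Sum>e0 | turn Adj e0 (p 0). if x = e0 then of_bool (begins p xs) else 0)"
    by (simp add: transfer_def ind_def begins_case_nat_Cons eq_commute)
  ultimately show ?thesis by simp
qed

lemma opp_opp [simp]: "opp (opp e) = e"
  by (simp add: opp_def)

locale nonbacktracking_graph =
  fixes Adj :: "'v \<Rightarrow> 'v \<Rightarrow> bool"
  assumes finite_oedges: "finite (oedges Adj)"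
    and symp_Adj: "symp Adj"
    and no_dead_end: "e \<in> oedges Adj \<Longrightarrow> \<exists>e'. turn Adj e e'"
begin

lemma code_extends_to_path:
  assumes c: "c \<in> codes Adj"
  shows "\<exists>p \<in> paths Adj. begins p c"
proof -
  obtain succ where succ: "\<And>e. e \<in> oedges Adj \<Longrightarrow> turn Adj e (succ e)"
    using no_dead_end by metis
  have iter_in: "(succ ^^ n) (last c) \<in> oedges Adj" for n
    by (induction n) (use c succ last_in_oedges in \<open>auto simp: turn_def\<close>)
  define p where "p i = (if i < length c then c ! i else (succ ^^ (Suc i - length c)) (last c))" for i
  have "turn Adj (p i) (p (Suc i))" for i
  proof (cases "Suc i < length c")
    case True
    then show ?thesis using c by (simp add: p_def codes_def)
  next
    case False
    have "c \<noteq> []" using c by (simp add: codes_def)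
    then have "p j = (succ ^^ (Suc j - length c)) (last c)" if "length c \<le> Suc j" for j
      using that by (cases "j < length c")
        (auto simp: p_def last_conv_nth intro: arg_cong[where f = "(!) c"])
    then show ?thesis
      using False succ[OF iter_in] by (simp add: Suc_diff_le)
  qed
  moreover have "begins p c" by (simp add: begins_def p_def)
  ultimately show ?thesis by (auto simp: paths_def)
qed

lemma begins_ext_path: "c \<in> codes Adj \<Longrightarrow> begins (ext_path Adj c) c"
  unfolding ext_path_def using code_extends_to_path[of c] by (metis (mono_tags, lifting) someI_ex)

lemma transfer_ind_ext_path:
  assumes c: "c \<in> codes Adj" and c': "c' \<in> codes_m Adj (length c)"
  shows "transfer Adj (ind c) (ext_path Adj c')
    = of_bool (c' \<in> (\<lambda>e. tl c @ [e]) ` {e. turn Adj (last c) e})"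
proof -
  obtain x xs where c_Cons: "c = x # xs" using c by (cases c) (auto simp: codes_def)
  have c'_code: "c' \<in> codes Adj" and len: "length c' = Suc (length xs)"
    using c' c_Cons by (auto simp: codes_m_def)
  have begins: "begins (ext_path Adj c') c'"
    using begins_ext_path[OF c'_code] .
  then have "ext_path Adj c' 0 = hd c'"
    using len by (cases c') (auto simp: begins_def)
  moreover have "begins (ext_path Adj c') xs \<longleftrightarrow> butlast c' = xs"
    using begins_prefix_iff[OF begins] len by (auto simp: butlast_conv_take)
  ultimately show ?thesis
    using shifted_code_iff[of x xs Adj c'] c c' c_Cons finite_oedges
    by (auto simp: transfer_ind_Cons)
qed

lemma dual_transfer_eq_sum:
  assumes c: "c \<in> codes Adj"
  shows "dual_transfer Adj \<mu> c = (\<Sum>e | turn Adj (last c) e. \<mu> (tl c @ [e]))"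
proof -
  define I where "I = (\<lambda>e. tl c @ [e]) ` {e. turn Adj (last c) e}"
  have "I \<subseteq> codes_m Adj (length c)"
    using tl_snoc_in_codes_m[OF c] by (auto simp: I_def)
  have "dual_transfer Adj \<mu> c = (\<Sum>c' \<in> codes_m Adj (length c). of_bool (c' \<in> I) * \<mu> c')"
    using c by (simp add: dual_transfer_def pairing_def transfer_ind_ext_path I_def)
  also have "\<dots> = (\<Sum>c' \<in> codes_m Adj (length c). if c' \<in> I then \<mu> c' else 0)"
    by (intro sum.cong) auto
  also have "\<dots> = (\<Sum>c' \<in> I. \<mu> c')"
    using \<open>I \<subseteq> _\<close> sum.inter_restrict[OF finite_codes_m[OF finite_oedges], of \<mu> "length c" I]
    by (simp add: Int_absorb1)
  also have "\<dots> = (\<Sum>e | turn Adj (last c) e. \<mu> (tl c @ [e]))"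
    unfolding I_def by (subst sum.reindex) (auto simp: inj_on_def)
  finally show ?thesis .
qed

lemma dual_transfer_FA_eq_tl:
  assumes "\<mu> \<in> FA Adj" and c: "c \<in> codes Adj" and "tl c \<noteq> []"
  shows "dual_transfer Adj \<mu> c = \<mu> (tl c)"
proof -
  have "last (tl c) = last c" using \<open>tl c \<noteq> []\<close> by (cases c) auto
  then show ?thesis
    using assms tl_in_codes[OF c] by (simp add: dual_transfer_eq_sum FA_def)
qed

lemma opp_in_oedges: "e \<in> oedges Adj \<Longrightarrow> opp e \<in> oedges Adj"
  using symp_Adj by (auto simp: oedges_def opp_def dest: sympD)

lemma turn_opp_iff: "turn Adj (opp e) (opp e') \<longleftrightarrow> turn Adj e' e"
  using opp_in_oedges[of e] opp_in_oedges[of e'] opp_in_oedges[of "opp e"] opp_in_oedges[of "opp e'"]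
  unfolding turn_def tau_def iota_def by (auto simp: opp_def)

lemma sum_turn_from_opp: "(\<Sum>e' | turn Adj (opp e) e'. h e') = (\<Sum>e' | turn Adj e' e. h (opp e'))"
  by (rule sum.reindex_bij_witness[of _ opp opp])
     (auto simp: turn_opp_iff[of e, symmetric] turn_opp_iff[of _ e, symmetric, simplified])

lemma sum_turn_opp_eigen:
  assumes "Sop Adj f = (\<lambda>e. z * f e)" and "e \<in> oedges Adj"
  shows "(\<Sum>e' | turn Adj e e'. f (opp e')) = z * f (opp e)"
proof -
  have "(\<Sum>e' | turn Adj e e'. f (opp e')) = (\<Sum>e' | turn Adj e' (opp e). f e')"
    using sum_turn_from_opp[where e = "opp e" and h = "f \<circ> opp"] by simp
  also have "\<dots> = Sop Adj f (opp e)"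
    using opp_in_oedges[OF assms(2)] by (simp add: Sop_def)
  finally show ?thesis using assms(1) by simp
qed

lemma Sop_f_of_mu:
  assumes "dual_transfer Adj \<mu> = (\<lambda>c. z * \<mu> c)"
  shows "Sop Adj (f_of_mu Adj \<mu>) = (\<lambda>e. z * f_of_mu Adj \<mu> e)"
proof
  fix e
  show "Sop Adj (f_of_mu Adj \<mu>) e = z * f_of_mu Adj \<mu> e"
  proof (cases "e \<in> oedges Adj")
    case True
    have "Sop Adj (f_of_mu Adj \<mu>) e = (\<Sum>e' | turn Adj e' e. \<mu> [opp e'])"
      using True by (auto simp: Sop_def f_of_mu_def turn_def intro: sum.cong)
    also have "\<dots> = (\<Sum>e' | turn Adj (opp e) e'. \<mu> [e'])"
      by (rule sum_turn_from_opp[symmetric])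
    also have "\<dots> = dual_transfer Adj \<mu> [opp e]"
      using opp_in_oedges[OF True] by (simp add: dual_transfer_eq_sum)
    finally show ?thesis using assms True by (simp add: f_of_mu_def)
  qed (simp add: Sop_def f_of_mu_def)
qed

lemma mu_of_f_in_FA:
  assumes "z \<noteq> 0" and eigen: "Sop Adj f = (\<lambda>e. z * f e)"
  shows "mu_of_f Adj z f \<in> FA Adj"
  unfolding FA_def
proof (intro CollectI conjI ballI allI impI)
  fix c assume c: "c \<in> codes Adj"
  have "(\<Sum>e | turn Adj (last c) e. mu_of_f Adj z f (c @ [e]))
      = z powi (- int (length c)) * (\<Sum>e | turn Adj (last c) e. f (opp e))"
    using snoc_in_codes[OF c] by (simp add: mu_of_f_def sum_distrib_left)
  also have "\<dots> = z powi (- int (length c)) * z * f (opp (last c))"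
    using sum_turn_opp_eigen[OF eigen last_in_oedges[OF c]] by simp
  also have "\<dots> = mu_of_f Adj z f c"
    using c \<open>z \<noteq> 0\<close> by (simp add: mu_of_f_def power_int_add_1[symmetric])
  finally show "mu_of_f Adj z f c = (\<Sum>e | turn Adj (last c) e. mu_of_f Adj z f (c @ [e]))" ..
qed (simp add: mu_of_f_def)

lemma dual_transfer_mu_of_f:
  assumes eigen: "Sop Adj f = (\<lambda>e. z * f e)"
  shows "dual_transfer Adj (mu_of_f Adj z f) = (\<lambda>c. z * mu_of_f Adj z f c)"
proof
  fix c
  show "dual_transfer Adj (mu_of_f Adj z f) c = z * mu_of_f Adj z f c"
  proof (cases "c \<in> codes Adj")
    case True
    have "length c \<noteq> 0" using True by (simp add: codes_def)
    then have "dual_transfer Adj (mu_of_f Adj z f) c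
        = z powi (1 - int (length c)) * (\<Sum>e | turn Adj (last c) e. f (opp e))"
      using True tl_snoc_in_codes_m[OF True]
      by (simp add: dual_transfer_eq_sum mu_of_f_def codes_m_def sum_distrib_left)
    then show ?thesis
      using True sum_turn_opp_eigen[OF eigen last_in_oedges[OF True]] by (simp add: mu_of_f_def)
  qed (simp add: dual_transfer_def mu_of_f_def)
qed

lemma FA_eig_eq_power_int:
  assumes "z \<noteq> 0" and \<mu>: "\<mu> \<in> FA_eig Adj z"
  shows "c \<in> codes Adj \<Longrightarrow> \<mu> c = z powi (1 - int (length c)) * \<mu> [last c]"
proof (induction c)
  case (Cons x xs)
  have FA: "\<mu> \<in> FA Adj" and eigen: "dual_transfer Adj \<mu> = (\<lambda>c. z * \<mu> c)"
    using \<mu> by (auto simp: FA_eig_def)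
  show ?case
  proof (cases "xs = []")
    case False
    have "z * \<mu> (x # xs) = \<mu> xs"
      using dual_transfer_FA_eq_tl[OF FA Cons.prems] fun_cong[OF eigen, of "x # xs"] False by simp
    also have "\<dots> = z powi (1 - int (length xs)) * \<mu> [last xs]"
      using Cons tl_in_codes[OF Cons.prems] False by simp
    also have "\<dots> = z * (z powi (1 - int (length (x # xs))) * \<mu> [last (x # xs)])"
      using \<open>z \<noteq> 0\<close> False by (simp add: power_int_add_1'[symmetric] algebra_simps)
    finally show ?thesis using \<open>z \<noteq> 0\<close> by simp
  qed simp
qed (simp add: codes_def)

lemma mu_of_f_f_of_mu:
  assumes "z \<noteq> 0" and \<mu>: "\<mu> \<in> FA_eig Adj z"
  shows "mu_of_f Adj z (f_of_mu Adj \<mu>) = \<mu>"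
proof
  fix c
  show "mu_of_f Adj z (f_of_mu Adj \<mu>) c = \<mu> c"
  proof (cases "c \<in> codes Adj")
    case True
    then show ?thesis
      using FA_eig_eq_power_int[OF assms True] opp_in_oedges[OF last_in_oedges[OF True]]
      by (simp add: mu_of_f_def f_of_mu_def)
  next
    case False
    then show ?thesis using \<mu> by (simp add: mu_of_f_def FA_eig_def FA_def)
  qed
qed

lemma f_of_mu_mu_of_f:
  assumes "f \<in> MapE Adj"
  shows "f_of_mu Adj (mu_of_f Adj z f) = f"
  using assms opp_in_oedges by (auto simp: fun_eq_iff f_of_mu_def mu_of_f_def MapE_def)

lemma f_of_mu_in_S_eig: "\<mu> \<in> FA_eig Adj z \<Longrightarrow> f_of_mu Adj \<mu> \<in> S_eig Adj z"
  using Sop_f_of_mu by (simp add: FA_eig_def S_eig_def MapE_def f_of_mu_def)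

lemma mu_of_f_in_FA_eig: "z \<noteq> 0 \<Longrightarrow> f \<in> S_eig Adj z \<Longrightarrow> mu_of_f Adj z f \<in> FA_eig Adj z"
  using mu_of_f_in_FA dual_transfer_mu_of_f by (simp add: FA_eig_def S_eig_def)

end

lemma nonbacktracking_graph_if_graph_ok:
  assumes "graph_ok V Adj"
  shows "nonbacktracking_graph Adj"
proof
  have "oedges Adj \<subseteq> V \<times> V" and "finite V"
    using assms by (auto simp: graph_ok_def oedges_def)
  then show "finite (oedges Adj)" by (meson finite_SigmaI finite_subset)
  show "symp Adj" using assms by (auto simp: graph_ok_def intro: sympI)
next
  fix e assume "e \<in> oedges Adj"
  then obtain u v where e: "e = (u, v)" and "Adj u v" by (auto simp: oedges_def)
  then have "card {w. Adj v w} \<ge> 2" using assms by (auto simp: graph_ok_def)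
  then have "\<not> {w. Adj v w} \<subseteq> {u}"
    using card_mono[of "{u}" "{w. Adj v w}"] by auto
  then obtain w where "Adj v w" and "w \<noteq> u" by auto
  then have "turn Adj e (v, w)"
    using e \<open>Adj u v\<close> by (auto simp: turn_def oedges_def tau_def iota_def opp_def)
  then show "\<exists>e'. turn Adj e e'" ..
qed

theorem mainTheorem13:
  fixes V :: "'v set" and Adj :: "'v \<Rightarrow> 'v \<Rightarrow> bool" and z :: complex
  assumes "graph_ok V Adj" and "z \<noteq> 0"
  shows "(\<forall>\<mu> \<in> FA Adj. dual_transfer Adj \<mu> = (\<lambda>c. z * \<mu> c) \<longrightarrow>
            Sop Adj (f_of_mu Adj \<mu>) = (\<lambda>e. z * f_of_mu Adj \<mu> e))
    \<and> (\<forall>f \<in> MapE Adj. Sop Adj f = (\<lambda>e. z * f e) \<longrightarrow>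
            mu_of_f Adj z f \<in> FA Adj
          \<and> dual_transfer Adj (mu_of_f Adj z f) = (\<lambda>c. z * mu_of_f Adj z f c))
    \<and> bij_betw (f_of_mu Adj) (FA_eig Adj z) (S_eig Adj z)
    \<and> bij_betw (mu_of_f Adj z) (S_eig Adj z) (FA_eig Adj z)
    \<and> (\<forall>\<mu> \<in> FA_eig Adj z. mu_of_f Adj z (f_of_mu Adj \<mu>) = \<mu>)
    \<and> (\<forall>f \<in> S_eig Adj z. f_of_mu Adj (mu_of_f Adj z f) = f)
    \<and> (\<forall>a b \<mu> \<nu>. f_of_mu Adj (\<lambda>c. a * \<mu> c + b * \<nu> c)
                = (\<lambda>e. a * f_of_mu Adj \<mu> e + b * f_of_mu Adj \<nu> e))
    \<and> (\<forall>a b f g. mu_of_f Adj z (\<lambda>e. a * f e + b * g e)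
                = (\<lambda>c. a * mu_of_f Adj z f c + b * mu_of_f Adj z g c))"
proof -
  interpret nonbacktracking_graph Adj
    using assms(1) by (rule nonbacktracking_graph_if_graph_ok)
  have inverse1: "\<forall>\<mu> \<in> FA_eig Adj z. mu_of_f Adj z (f_of_mu Adj \<mu>) = \<mu>"
    using mu_of_f_f_of_mu assms(2) by blast
  have inverse2: "\<forall>f \<in> S_eig Adj z. f_of_mu Adj (mu_of_f Adj z f) = f"
    using f_of_mu_mu_of_f by (simp add: S_eig_def)
  have image1: "f_of_mu Adj ` FA_eig Adj z \<subseteq> S_eig Adj z"
    using f_of_mu_in_S_eig by blast
  have image2: "mu_of_f Adj z ` S_eig Adj z \<subseteq> FA_eig Adj z"
    using mu_of_f_in_FA_eig assms(2) by blast
  show ?thesis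
    using Sop_f_of_mu mu_of_f_in_FA[OF assms(2)] dual_transfer_mu_of_f inverse1 inverse2
      bij_betw_byWitness[OF inverse1 inverse2 image1 image2]
      bij_betw_byWitness[OF inverse2 inverse1 image2 image1]
    by (simp add: fun_eq_iff f_of_mu_def mu_of_f_def algebra_simps)
qed

end
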